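(* Let $b_0\ge1$ be an integer, $m>1$, and $0<\gamma<1/m$, and set $\alpha=-(\log\gamma)/\log m$. Let $B_0,B_1,\dots$ be independent random variables with $B_k$ uniformly distributed on the interval $[0,2b_0m^k-1]$ (mean $b_0m^k-1/2$), and let $\kappa$ be an independent random variable on $\{0,1,2,\dots\}$ with $\mathbb{P}[\kappa=k]=\gamma^k-\gamma^{k+1}$. Let $\Omega=\sum_{k=0}^{\kappa}B_k$. Then $\Omega$ has a wide-sense heavy-tailed distribution. Moreover, for real $c\ge 0$, $\mathbb{E}[\Omega^c]$ is infinite if $c\ge\alpha$ and finite if $0\le c<\alpha$.
   Context: This is the per-packet backoff of IEEE 802.11 with infinitely many backoff stages ($K=\infty$), multiplicative factor $m$, initial contention window $2b_0$ and collision probability $\gamma$ (which in the model satisfies $\gamma<1/m$, so $\alpha>1$). A random variable with density $f$ on $[0,\infty)$ is called wide-sense heavy-tailed if $\int_0^\infty e^{tx}f(x)\,dx=\infty$ for all $t>0$. *)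

theory Defs
  imports "HOL-Probability.Probability"
begin

definition wide_sense_heavy_tailed :: "'a measure \<Rightarrow> ('a \<Rightarrow> real) \<Rightarrow> bool" where
  "wide_sense_heavy_tailed M X \<longleftrightarrow>
     (\<exists>f. distributed M lborel X f \<and> (\<forall>x<0. f x = 0) \<and>
          (\<forall>t>0. (\<integral>\<^sup>+ x. indicator {0..} x * ennreal (exp (t * x)) * f x \<partial>lborel) = \<infinity>))"

end

theory Submission
  imports Defs
begin

text \<open>
  Almost surely \<open>B\<^sub>\<kappa> \<le> \<Omega> \<le> D m\<^sup>\<kappa>\<close> for a constant \<open>D\<close>, and \<open>\<P>(\<kappa> = k) = (1 - \<gamma>) \<gamma>\<^sup>k\<close>.
  Since \<open>\<kappa>\<close> and \<open>B\<^sub>k\<close> are independent, with probability \<open>\<P>(\<kappa> = k) / 2\<close> the last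
  backoff \<open>B\<^sub>\<kappa>\<close> lies in the upper half of its window and so exceeds \<open>m\<^sup>k / 2\<close>.
  Both bounds make \<open>E[\<Omega>\<^sup>c]\<close> comparable to the geometric series \<open>\<Sum> (m\<^sup>c \<gamma>)\<^sup>k\<close>,
  which diverges exactly when \<open>m\<^sup>c \<gamma> \<ge> 1\<close>, i.e. \<open>c \<ge> \<alpha>\<close>.

  For the heavy tail, \<open>\<Omega>\<close> has a density: on \<open>{\<kappa> = n}\<close> it equals \<open>B\<^sub>0\<close> plus a
  variable independent of \<open>B\<^sub>0\<close>, and adding an independent variable to one with an
  absolutely continuous law keeps the law absolutely continuous. Finally
  \<open>e\<^sup>t\<^sup>x \<ge> (t x / \<alpha>)\<^sup>\<alpha>\<close> turns the infinite \<open>\<alpha>\<close>-th moment into an infinite exponential moment.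
\<close>

lemma AE_distr_uniform_interval:
  fixes X :: "'a \<Rightarrow> real"
  assumes "X \<in> borel_measurable M" "distr M lborel X = uniform_measure lborel {a..b}"
  shows "AE \<omega> in M. a \<le> X \<omega> \<and> X \<omega> \<le> b"
proof -
  have "AE x in distr M lborel X. a \<le> x \<and> x \<le> b"
    unfolding assms(2) by (rule AE_uniform_measureI) auto
  then show ?thesis
    using assms(1) by (intro AE_distrD[of X M lborel]) auto
qed

lemma emeasure_distr_uniform_upper_half:
  fixes X :: "'a \<Rightarrow> real"
  assumes "X \<in> borel_measurable M" "distr M lborel X = uniform_measure lborel {a..b}" "a < b"
  shows "emeasure M {\<omega>\<in>space M. (a + b) / 2 \<le> X \<omega>} = 1 / 2"
proof -
  have "emeasure M {\<omega>\<in>space M. (a + b) / 2 \<le> X \<omega>} = emeasure (distr M lborel X) {(a + b) / 2..}"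
    using assms(1) by (subst emeasure_distr) (auto intro!: arg_cong[where f="emeasure M"])
  also have "\<dots> = emeasure lborel ({a..b} \<inter> {(a + b) / 2..}) / emeasure lborel {a..b}"
    unfolding assms(2) by (rule emeasure_uniform_measure) auto
  also have "{a..b} \<inter> {(a + b) / 2..} = {(a + b) / 2..b}"
    using assms(3) by auto
  also have "emeasure lborel {(a + b) / 2..b} / emeasure lborel {a..b} = ennreal ((b - a) / 2) / ennreal (b - a)"
    using assms(3) by (simp add: field_simps)
  also have "\<dots> = ennreal ((b - a) / 2 / (b - a))"
    using assms(3) by (subst divide_ennreal) auto
  also have "(b - a) / 2 / (b - a) = 1 / 2"
    using assms(3) by simp
  also have "ennreal (1 / 2) = 1 / 2"
    by (simp add: divide_ennreal_def)
  finally show ?thesis .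
qed

lemma absolutely_continuous_uniform_measure:
  assumes [measurable]: "A \<in> sets M"
  shows "absolutely_continuous M (uniform_measure M A)"
  unfolding uniform_measure_def by (rule absolutely_continuousI_density) measurable

lemma (in prob_space) null_sets_add_indep:
  fixes X Y :: "'a \<Rightarrow> real"
  assumes indep: "indep_var borel X borel Y"
    and ac: "absolutely_continuous lborel (distr M lborel X)"
    and N: "N \<in> null_sets lborel"
  shows "{\<omega>\<in>space M. X \<omega> + Y \<omega> \<in> N} \<in> null_sets M"
proof -
  have rv: "random_variable borel X" "random_variable borel Y"
    using indep by (blast dest: indep_var_rv1 indep_var_rv2)+
  then have [measurable]: "X \<in> borel_measurable M" "Y \<in> borel_measurable M"
    by auto
  have [measurable]: "N \<in> sets borel"
    using N by (auto simp: null_sets_def)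
  interpret DX: prob_space "distr M borel X" by (rule prob_space_distr[OF rv(1)])
  interpret DY: prob_space "distr M borel Y" by (rule prob_space_distr[OF rv(2)])
  interpret DXY: pair_prob_space "distr M borel X" "distr M borel Y" ..
  define A where "A = {p::real \<times> real. fst p + snd p \<in> N}"
  have A: "A \<in> sets (borel \<Otimes>\<^sub>M borel)"
  proof -
    have "{p \<in> space (borel \<Otimes>\<^sub>M borel). fst p + snd p \<in> N} \<in> sets (borel \<Otimes>\<^sub>M (borel::real measure))"
      by measurable
    then show ?thesis by (simp add: A_def space_pair_measure)
  qed
  have slice_null: "emeasure (distr M borel X) ((\<lambda>x. (x, y)) -` A) = 0" for y
  proof -
    have "(\<lambda>x. (x, y)) -` A = {x. x + y \<in> N}"
      by (auto simp: A_def)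
    moreover have "{x. x + y \<in> N} \<in> null_sets (distr M lborel X)"
      using ac null_sets_translation[OF N, of "- y"] by (auto simp: absolutely_continuous_def)
    moreover have "distr M borel X = distr M lborel X"
      by (rule distr_cong) auto
    ultimately show ?thesis
      by (simp add: null_setsD1)
  qed
  have "emeasure M {\<omega>\<in>space M. X \<omega> + Y \<omega> \<in> N} = emeasure (distr M (borel \<Otimes>\<^sub>M borel) (\<lambda>\<omega>. (X \<omega>, Y \<omega>))) A"
    using A by (subst emeasure_distr) (auto simp: A_def intro!: arg_cong[where f="emeasure M"])
  also have "\<dots> = emeasure (distr M borel X \<Otimes>\<^sub>M distr M borel Y) A"
    using indep indep_var_distribution_eq by metis
  also have "\<dots> = (\<integral>\<^sup>+y. emeasure (distr M borel X) ((\<lambda>x. (x, y)) -` A) \<partial>distr M borel Y)"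
    using A by (subst DXY.emeasure_pair_measure_alt2) auto
  also have "\<dots> = 0"
    by (simp add: slice_null)
  finally show ?thesis
    by (auto simp: null_sets_def)
qed

lemma (in prob_space) absolutely_continuous_distr_add_random_index:
  fixes X Z :: "'a \<Rightarrow> real" and Y :: "nat \<Rightarrow> 'a \<Rightarrow> real"
  assumes indep: "\<And>n. indep_var borel X borel (Y n)"
    and ac: "absolutely_continuous lborel (distr M lborel X)"
    and Z[measurable]: "Z \<in> borel_measurable M"
    and Z_eq: "\<And>\<omega>. \<omega> \<in> space M \<Longrightarrow> \<exists>n. Z \<omega> = X \<omega> + Y n \<omega>"
  shows "absolutely_continuous lborel (distr M lborel Z)"
  unfolding absolutely_continuous_def
proof
  fix N :: "real set"
  assume N: "N \<in> null_sets lborel"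
  then have [measurable]: "N \<in> sets borel"
    by (auto simp: null_sets_def)
  have "Z -` N \<inter> space M \<in> null_sets M"
  proof (rule null_sets_subset)
    show "(\<Union>n. {\<omega>\<in>space M. X \<omega> + Y n \<omega> \<in> N}) \<in> null_sets M"
      using null_sets_add_indep[OF indep ac N] by (rule null_sets_UN)
    show "Z -` N \<inter> space M \<in> sets M"
      by measurable
    show "Z -` N \<inter> space M \<subseteq> (\<Union>n. {\<omega>\<in>space M. X \<omega> + Y n \<omega> \<in> N})"
      using Z_eq by fastforce
  qed
  then show "N \<in> null_sets (distr M lborel Z)"
    using N by (subst null_sets_distr_iff) auto
qed

lemma powr_le_exp:
  fixes y c :: real
  assumes "0 \<le> y" "0 < c"
  shows "(y / c) powr c \<le> exp y"
proof (cases "y = 0")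
  case False
  then have "0 < y / c"
    using assms by simp
  then have "c * ln (y / c) \<le> c * (y / c)"
    using assms(2) by (intro mult_left_mono) (auto intro: less_imp_le)
  then show ?thesis
    using \<open>0 < y / c\<close> assms(2) by (simp add: powr_def mult.commute)
qed simp

lemma nn_integral_exp_eq_top_if_moment_eq_top:
  fixes X :: "'a \<Rightarrow> real"
  assumes [measurable]: "X \<in> borel_measurable M"
    and nonneg: "AE \<omega> in M. 0 \<le> X \<omega>"
    and moment: "(\<integral>\<^sup>+\<omega>. ennreal (X \<omega> powr c) \<partial>M) = \<infinity>"
    and "0 < c" "0 < t"
  shows "(\<integral>\<^sup>+\<omega>. ennreal (exp (t * X \<omega>)) \<partial>M) = \<infinity>"
proof -
  have C: "0 < (t / c) powr c"
    using assms(4,5) by simp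
  have "\<infinity> = ennreal ((t / c) powr c) * (\<integral>\<^sup>+\<omega>. ennreal (X \<omega> powr c) \<partial>M)"
    using moment C by (simp add: ennreal_mult_top)
  also have "\<dots> = (\<integral>\<^sup>+\<omega>. ennreal ((t / c) powr c * X \<omega> powr c) \<partial>M)"
    using C by (subst nn_integral_cmult[symmetric]) (auto simp: ennreal_mult)
  also have "\<dots> \<le> (\<integral>\<^sup>+\<omega>. ennreal (exp (t * X \<omega>)) \<partial>M)"
  proof (rule nn_integral_mono_AE)
    show "AE \<omega> in M. ennreal ((t / c) powr c * X \<omega> powr c) \<le> ennreal (exp (t * X \<omega>))"
      using nonneg
    proof eventually_elim
      case (elim \<omega>)
      have "(t / c) powr c * X \<omega> powr c = (t * X \<omega> / c) powr c"
        using elim assms(4,5) by (simp add: powr_mult[symmetric])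
      also have "\<dots> \<le> exp (t * X \<omega>)"
        using elim assms(4,5) by (intro powr_le_exp) auto
      finally show ?case
        by (rule ennreal_leI)
    qed
  qed
  finally show ?thesis
    by (simp add: top_unique)
qed

lemma distributed_nonneg_density:
  fixes X :: "'a \<Rightarrow> real"
  assumes [measurable]: "X \<in> borel_measurable M"
    and nonneg: "AE \<omega> in M. 0 \<le> X \<omega>"
    and ac: "absolutely_continuous lborel (distr M lborel X)"
  obtains f where "distributed M lborel X f" "\<And>x. x < 0 \<Longrightarrow> f x = 0"
proof -
  obtain f where [measurable]: "f \<in> borel_measurable lborel" and f: "density lborel f = distr M lborel X"
    using sigma_finite_measure.Radon_Nikodym[OF sigma_finite_lborel ac] by auto
  define g where "g x = f x * indicator {0..} x" for x :: real
  have [measurable]: "g \<in> borel_measurable borel"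
    unfolding g_def by measurable
  have "(\<integral>\<^sup>+x. f x * indicator {..<0} x \<partial>lborel) = emeasure (distr M lborel X) {..<0}"
    by (simp add: f[symmetric] emeasure_density)
  also have "\<dots> = emeasure M {\<omega>\<in>space M. X \<omega> < 0}"
    by (subst emeasure_distr) (auto intro!: arg_cong[where f="emeasure M"])
  also have "\<dots> = 0"
    using nonneg by (subst (asm) AE_iff_measurable[OF _ refl]) (auto simp: not_le)
  finally have "AE x in lborel. f x * indicator {..<0} x = 0"
    by (subst (asm) nn_integral_0_iff_AE) auto
  then have "AE x in lborel. f x = g x"
    by eventually_elim (auto simp: g_def indicator_def split: if_splits)
  then have "density lborel g = distr M lborel X"
    by (subst f[symmetric]) (intro density_cong, auto simp: g_def)
  then have "distributed M lborel X g"
    by (auto simp: distributed_def g_def)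
  then show ?thesis
    by (rule that) (simp add: g_def)
qed

lemma wide_sense_heavy_tailedI:
  fixes X :: "'a \<Rightarrow> real"
  assumes [measurable]: "X \<in> borel_measurable M"
    and nonneg: "AE \<omega> in M. 0 \<le> X \<omega>"
    and ac: "absolutely_continuous lborel (distr M lborel X)"
    and "0 < c" "(\<integral>\<^sup>+\<omega>. ennreal (X \<omega> powr c) \<partial>M) = \<infinity>"
  shows "wide_sense_heavy_tailed M X"
proof -
  obtain f where f: "distributed M lborel X f" and f_neg: "\<And>x. x < 0 \<Longrightarrow> f x = 0"
    using distributed_nonneg_density[OF assms(1) nonneg ac] by blast
  have [measurable]: "f \<in> borel_measurable lborel"
    using f by (rule distributed_borel_measurable)
  have "(\<integral>\<^sup>+x. indicator {0..} x * ennreal (exp (t * x)) * f x \<partial>lborel) = \<infinity>" if "t > 0" for t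
  proof -
    have "(\<integral>\<^sup>+x. indicator {0..} x * ennreal (exp (t * x)) * f x \<partial>lborel)
        = (\<integral>\<^sup>+x. f x * ennreal (exp (t * x)) \<partial>lborel)"
      using f_neg by (intro nn_integral_cong) (auto simp: indicator_def not_le mult.commute)
    also have "\<dots> = (\<integral>\<^sup>+x. ennreal (exp (t * x)) \<partial>distr M lborel X)"
      using distributed_distr_eq_density[OF f] by (simp add: nn_integral_density)
    also have "\<dots> = (\<integral>\<^sup>+\<omega>. ennreal (exp (t * X \<omega>)) \<partial>M)"
      by (rule nn_integral_distr) auto
    also have "\<dots> = \<infinity>"
      using assms(1) nonneg assms(5,4) that by (rule nn_integral_exp_eq_top_if_moment_eq_top)
    finally show ?thesis .
  qed
  then show ?thesis
    unfolding wide_sense_heavy_tailed_def using f f_neg by blast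
qed

lemma nn_integral_ge_suminf_disjoint:
  fixes f :: "'a \<Rightarrow> ennreal" and E :: "nat \<Rightarrow> 'a set"
  assumes [measurable]: "f \<in> borel_measurable M" "\<And>k. E k \<in> sets M"
    and "disjoint_family E"
    and bound: "\<And>k. AE x in M. x \<in> E k \<longrightarrow> a k \<le> f x"
  shows "(\<Sum>k. a k * emeasure M (E k)) \<le> (\<integral>\<^sup>+x. f x \<partial>M)"
proof -
  have "a k * emeasure M (E k) \<le> (\<integral>\<^sup>+x \<in> E k. f x \<partial>M)" for k
  proof -
    have "a k * emeasure M (E k) = (\<integral>\<^sup>+x. a k * indicator (E k) x \<partial>M)"
      by (simp add: nn_integral_cmult_indicator)
    also have "\<dots> \<le> (\<integral>\<^sup>+x \<in> E k. f x \<partial>M)"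
      using bound[of k] by (intro nn_integral_mono_AE) (auto split: split_indicator)
    finally show ?thesis .
  qed
  then have "(\<Sum>k. a k * emeasure M (E k)) \<le> (\<Sum>k. \<integral>\<^sup>+x \<in> E k. f x \<partial>M)"
    by (intro suminf_le summableI)
  also have "\<dots> = (\<integral>\<^sup>+x \<in> (\<Union>k. E k). f x \<partial>M)"
    using assms(1-3) by (rule nn_integral_disjoint_family[symmetric])
  also have "\<dots> \<le> (\<integral>\<^sup>+x. f x \<partial>M)"
    by (intro nn_integral_mono) (simp split: split_indicator)
  finally show ?thesis .
qed

lemma nn_integral_le_suminf_partition:
  fixes f :: "'a \<Rightarrow> ennreal" and E :: "nat \<Rightarrow> 'a set"
  assumes [measurable]: "f \<in> borel_measurable M" "\<And>k. E k \<in> sets M"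
    and "disjoint_family E" "space M \<subseteq> (\<Union>k. E k)"
    and bound: "\<And>k. AE x in M. x \<in> E k \<longrightarrow> f x \<le> a k"
  shows "(\<integral>\<^sup>+x. f x \<partial>M) \<le> (\<Sum>k. a k * emeasure M (E k))"
proof -
  have "(\<integral>\<^sup>+x. f x \<partial>M) = (\<integral>\<^sup>+x \<in> (\<Union>k. E k). f x \<partial>M)"
    using assms(4) by (intro nn_integral_cong) (auto split: split_indicator)
  also have "\<dots> = (\<Sum>k. \<integral>\<^sup>+x \<in> E k. f x \<partial>M)"
    using assms(1-3) by (rule nn_integral_disjoint_family)
  also have "\<dots> \<le> (\<Sum>k. a k * emeasure M (E k))"
  proof (intro suminf_le summableI)
    fix k
    have "(\<integral>\<^sup>+x \<in> E k. f x \<partial>M) \<le> (\<integral>\<^sup>+x. a k * indicator (E k) x \<partial>M)"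
      using bound[of k] by (intro nn_integral_mono_AE) (auto split: split_indicator)
    also have "\<dots> = a k * emeasure M (E k)"
      by (simp add: nn_integral_cmult_indicator)
    finally show "(\<integral>\<^sup>+x \<in> E k. f x \<partial>M) \<le> a k * emeasure M (E k)" .
  qed
  finally show ?thesis .
qed

lemma suminf_ennreal_eq_top_if_bounded_below:
  fixes f :: "nat \<Rightarrow> real"
  assumes bound: "\<And>k. d \<le> f k" and "0 < d"
  shows "(\<Sum>k. ennreal (f k)) = \<infinity>"
proof -
  have "\<not> summable f"
  proof
    assume "summable f"
    then have "f \<longlonglongrightarrow> 0"
      by (rule summable_LIMSEQ_zero)
    then have "eventually (\<lambda>k. f k < d) sequentially"
      using \<open>0 < d\<close> by (rule order_tendstoD(2))
    then obtain k where "f k < d"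
      by (metis eventually_happens' sequentially_bot)
    with bound[of k] show False
      by linarith
  qed
  moreover have "0 \<le> f k" for k
    using bound[of k] \<open>0 < d\<close> by linarith
  ultimately show ?thesis
    using summable_iff_suminf_neq_top by auto
qed

lemma one_le_powr_mult_iff:
  fixes m \<gamma> c :: real
  assumes "1 < m" "0 < \<gamma>"
  shows "1 \<le> m powr c * \<gamma> \<longleftrightarrow> - ln \<gamma> / ln m \<le> c"
proof -
  have "m powr c * \<gamma> = exp (c * ln m + ln \<gamma>)"
    using assms by (simp add: powr_def exp_add)
  then have "1 \<le> m powr c * \<gamma> \<longleftrightarrow> - ln \<gamma> \<le> c * ln m"
    by auto
  also have "\<dots> \<longleftrightarrow> - ln \<gamma> / ln m \<le> c"
    using assms by (simp only: pos_divide_le_eq ln_gt_zero)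
  finally show ?thesis .
qed

lemma power_powr_eq_powr_power:
  fixes m c :: real
  assumes "0 < m"
  shows "(m ^ k) powr c = (m powr c) ^ k"
  using assms by (simp add: powr_realpow[symmetric] powr_powr powr_power mult.commute)

locale per_packet_backoff = prob_space M
  for M :: "'a measure" and b0 :: nat and m \<gamma> :: real
    and B :: "nat \<Rightarrow> 'a \<Rightarrow> real" and \<kappa> :: "'a \<Rightarrow> nat" and \<Omega> :: "'a \<Rightarrow> real" +
  assumes b0_ge_1: "b0 \<ge> 1" and m_gt_1: "m > 1"
    and \<gamma>_pos: "0 < \<gamma>" and \<gamma>_less: "\<gamma> < 1 / m"
    and B_measurable[measurable]: "\<And>k. B k \<in> borel_measurable M"
    and distr_B: "\<And>k. distr M lborel (B k) = uniform_measure lborel {0 .. 2 * real b0 * m ^ k - 1}"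
    and \<kappa>_measurable[measurable]: "\<kappa> \<in> measurable M (count_space UNIV)"
    and prob_\<kappa>: "\<And>k. prob {\<omega> \<in> space M. \<kappa> \<omega> = k} = \<gamma> ^ k - \<gamma> ^ (k + 1)"
    and indep: "indep_vars (\<lambda>_. borel)
      (\<lambda>i. case i of None \<Rightarrow> (\<lambda>\<omega>. real (\<kappa> \<omega>)) | Some k \<Rightarrow> B k) UNIV"
    and \<Omega>_eq: "\<And>\<omega>. \<Omega> \<omega> = (\<Sum>k\<in>{0..\<kappa> \<omega>}. B k \<omega>)"
begin

definition window :: "nat \<Rightarrow> real" where
  "window k = 2 * real b0 * m ^ k - 1"

lemma power_le_window: "m ^ k \<le> window k"
proof -
  have "1 \<le> m ^ k"
    using m_gt_1 by simp
  moreover have "2 * m ^ k \<le> 2 * real b0 * m ^ k"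
    using b0_ge_1 \<open>1 \<le> m ^ k\<close> by simp
  ultimately show ?thesis
    unfolding window_def by linarith
qed

lemma window_pos: "0 < window k"
  using power_le_window[of k] m_gt_1 by (smt (verit) one_le_power)

lemma \<gamma>_less_1: "\<gamma> < 1"
  using \<gamma>_less m_gt_1 by (smt (verit) divide_less_eq_1_pos)

lemma tail_exponent_pos: "0 < - ln \<gamma> / ln m"
  using \<gamma>_pos \<gamma>_less_1 m_gt_1 by (simp add: divide_neg_pos)

lemma \<Omega>_measurable[measurable]: "\<Omega> \<in> borel_measurable M"
proof -
  have "(\<lambda>\<omega>. \<Sum>k\<in>{0..\<kappa> \<omega>}. B k \<omega>) \<in> borel_measurable M"
    by (rule measurable_compose_countable[of "\<lambda>n \<omega>. \<Sum>k\<in>{0..n}. B k \<omega>" _ _ \<kappa>]) auto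
  then show ?thesis
    by (simp add: \<Omega>_eq[abs_def])
qed

lemma AE_B_bounds: "AE \<omega> in M. \<forall>k. 0 \<le> B k \<omega> \<and> B k \<omega> \<le> window k"
  using AE_distr_uniform_interval[OF B_measurable distr_B]
  by (simp add: AE_all_countable window_def)

lemma AE_\<Omega>_nonneg: "AE \<omega> in M. 0 \<le> \<Omega> \<omega>"
  using AE_B_bounds by eventually_elim (auto simp: \<Omega>_eq intro: sum_nonneg)

lemma AE_last_le_\<Omega>: "AE \<omega> in M. B (\<kappa> \<omega>) \<omega> \<le> \<Omega> \<omega>"
  using AE_B_bounds by eventually_elim (auto simp: \<Omega>_eq intro: member_le_sum)

lemma AE_\<Omega>_le: "AE \<omega> in M. \<Omega> \<omega> \<le> 2 * real b0 * m / (m - 1) * m ^ \<kappa> \<omega>"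
  using AE_B_bounds
proof eventually_elim
  case (elim \<omega>)
  have geometric: "(\<Sum>k\<in>{0..n}. m ^ k) \<le> m ^ Suc n / (m - 1)" for n
  proof -
    have "(\<Sum>k\<in>{0..n}. m ^ k) = (m ^ Suc n - 1) / (m - 1)"
      using m_gt_1 sum_gp_multiplied[of 0 n m] by (simp add: field_simps)
    then show ?thesis
      using m_gt_1 by (simp add: divide_right_mono)
  qed
  have "B k \<omega> \<le> 2 * real b0 * m ^ k" for k
    using elim by (auto simp: window_def dest: spec[of _ k])
  then have "\<Omega> \<omega> \<le> (\<Sum>k\<in>{0..\<kappa> \<omega>}. 2 * real b0 * m ^ k)"
    unfolding \<Omega>_eq by (intro sum_mono)
  also have "\<dots> = 2 * real b0 * (\<Sum>k\<in>{0..\<kappa> \<omega>}. m ^ k)"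
    by (simp add: sum_distrib_left)
  also have "\<dots> \<le> 2 * real b0 * (m ^ Suc (\<kappa> \<omega>) / (m - 1))"
    using geometric by (intro mult_left_mono) auto
  also have "\<dots> = 2 * real b0 * m / (m - 1) * m ^ \<kappa> \<omega>"
    by simp
  finally show ?case .
qed

lemma prob_\<kappa>_eq_and_B_upper_half:
  "prob {\<omega>\<in>space M. \<kappa> \<omega> = k \<and> window k / 2 \<le> B k \<omega>} = (\<gamma> ^ k - \<gamma> ^ (k + 1)) / 2"
proof -
  let ?X = "\<lambda>i. case i of None \<Rightarrow> (\<lambda>\<omega>. real (\<kappa> \<omega>)) | Some j \<Rightarrow> B j"
  let ?A = "\<lambda>i::nat option. case i of None \<Rightarrow> {real k} | Some j \<Rightarrow> {window k / 2..}"
  have "prob (\<Inter>i\<in>{None, Some k}. ?X i -` ?A i \<inter> space M)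
      = (\<Prod>i\<in>{None, Some k}. prob (?X i -` ?A i \<inter> space M))"
    by (rule indep_varsD[OF indep]) (auto split: option.split)
  moreover have "(\<Inter>i\<in>{None, Some k}. ?X i -` ?A i \<inter> space M)
      = {\<omega>\<in>space M. \<kappa> \<omega> = k \<and> window k / 2 \<le> B k \<omega>}"
    by auto
  moreover have "prob {\<omega>\<in>space M. window k / 2 \<le> B k \<omega>} = 1 / 2"
  proof -
    have "emeasure M {\<omega>\<in>space M. window k / 2 \<le> B k \<omega>} = ennreal (1 / 2)"
      using emeasure_distr_uniform_upper_half[OF B_measurable distr_B[folded window_def] window_pos]
      by (simp add: divide_ennreal_def)
    then show ?thesis
      by (simp add: measure_def del: ennreal_half)
  qed
  ultimately show ?thesis
    using prob_\<kappa>[of k] by (simp add: vimage_def Int_def conj_commute)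
qed

lemma moment_eq_top:
  assumes c: "- ln \<gamma> / ln m \<le> c"
  shows "(\<integral>\<^sup>+\<omega>. ennreal (\<Omega> \<omega> powr c) \<partial>M) = \<infinity>"
proof -
  have "0 < c"
    using tail_exponent_pos c by linarith
  define q where "q = m powr c"
  have "1 \<le> q * \<gamma>"
    using one_le_powr_mult_iff[OF m_gt_1 \<gamma>_pos] c by (simp add: q_def)
  define E where "E k = {\<omega>\<in>space M. \<kappa> \<omega> = k \<and> window k / 2 \<le> B k \<omega>}" for k
  define a where "a k = (m ^ k / 2) powr c" for k
  have "\<infinity> = (\<Sum>k. ennreal (a k * ((\<gamma> ^ k - \<gamma> ^ (k + 1)) / 2)))"
  proof (rule suminf_ennreal_eq_top_if_bounded_below[symmetric])
    show "0 < (1 - \<gamma>) / (2 * 2 powr c)"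
      using \<gamma>_less_1 by simp
    fix k
    have "a k * ((\<gamma> ^ k - \<gamma> ^ (k + 1)) / 2) = (q * \<gamma>) ^ k * ((1 - \<gamma>) / (2 * 2 powr c))"
      using m_gt_1 by (simp add: a_def q_def powr_divide power_powr_eq_powr_power
          field_simps)
    moreover have "1 * ((1 - \<gamma>) / (2 * 2 powr c)) \<le> (q * \<gamma>) ^ k * ((1 - \<gamma>) / (2 * 2 powr c))"
      using \<open>1 \<le> q * \<gamma>\<close> \<gamma>_less_1 by (intro mult_right_mono one_le_power) auto
    ultimately show "(1 - \<gamma>) / (2 * 2 powr c) \<le> a k * ((\<gamma> ^ k - \<gamma> ^ (k + 1)) / 2)"
      by simp
  qed
  also have "\<dots> = (\<Sum>k. ennreal (a k) * emeasure M (E k))"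
  proof (rule suminf_cong)
    fix k
    have "emeasure M (E k) = ennreal ((\<gamma> ^ k - \<gamma> ^ (k + 1)) / 2)"
      by (simp only: E_def emeasure_eq_measure prob_\<kappa>_eq_and_B_upper_half)
    moreover have "0 \<le> a k"
      by (simp add: a_def)
    ultimately show "ennreal (a k * ((\<gamma> ^ k - \<gamma> ^ (k + 1)) / 2)) = ennreal (a k) * emeasure M (E k)"
      by (simp only: ennreal_mult')
  qed
  also have "\<dots> \<le> (\<integral>\<^sup>+\<omega>. ennreal (\<Omega> \<omega> powr c) \<partial>M)"
  proof (rule nn_integral_ge_suminf_disjoint)
    show "E k \<in> sets M" for k
      unfolding E_def by measurable
    show "disjoint_family E"
      by (auto simp: disjoint_family_on_def E_def)
    show "AE \<omega> in M. \<omega> \<in> E k \<longrightarrow> ennreal (a k) \<le> ennreal (\<Omega> \<omega> powr c)" for k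
      using AE_last_le_\<Omega>
    proof eventually_elim
      case (elim \<omega>)
      show ?case
      proof
        assume "\<omega> \<in> E k"
        then have "m ^ k / 2 \<le> \<Omega> \<omega>"
          using elim power_le_window[of k] by (auto simp: E_def)
        then show "ennreal (a k) \<le> ennreal (\<Omega> \<omega> powr c)"
          unfolding a_def using m_gt_1 \<open>0 < c\<close> by (intro ennreal_leI powr_mono2) auto
      qed
    qed
  qed measurable
  finally show ?thesis
    by (simp add: top_unique)
qed

lemma moment_less_top:
  assumes "0 \<le> c" "c < - ln \<gamma> / ln m"
  shows "(\<integral>\<^sup>+\<omega>. ennreal (\<Omega> \<omega> powr c) \<partial>M) < \<infinity>"
proof -
  define q where "q = m powr c"
  have "q * \<gamma> < 1"
    using one_le_powr_mult_iff[OF m_gt_1 \<gamma>_pos, of c] assms(2) by (auto simp: q_def)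
  define D where "D = 2 * real b0 * m / (m - 1)"
  have "0 \<le> D"
    using m_gt_1 by (simp add: D_def)
  define K where "K k = {\<omega>\<in>space M. \<kappa> \<omega> = k}" for k
  have "(\<integral>\<^sup>+\<omega>. ennreal (\<Omega> \<omega> powr c) \<partial>M) \<le> (\<Sum>k. ennreal (D powr c * q ^ k) * emeasure M (K k))"
  proof (rule nn_integral_le_suminf_partition)
    show "K k \<in> sets M" for k
      unfolding K_def by measurable
    show "disjoint_family K"
      by (auto simp: disjoint_family_on_def K_def)
    show "space M \<subseteq> (\<Union>k. K k)"
      by (auto simp: K_def)
    show "AE \<omega> in M. \<omega> \<in> K k \<longrightarrow> ennreal (\<Omega> \<omega> powr c) \<le> ennreal (D powr c * q ^ k)" for k
      using AE_\<Omega>_nonneg AE_\<Omega>_le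
    proof eventually_elim
      case (elim \<omega>)
      show ?case
      proof
        assume "\<omega> \<in> K k"
        then have "\<Omega> \<omega> powr c \<le> (D * m ^ k) powr c"
          using elim assms(1) by (intro powr_mono2) (auto simp: K_def D_def)
        also have "\<dots> = D powr c * q ^ k"
          using \<open>0 \<le> D\<close> m_gt_1 by (simp add: q_def powr_mult power_powr_eq_powr_power)
        finally show "ennreal (\<Omega> \<omega> powr c) \<le> ennreal (D powr c * q ^ k)"
          by (rule ennreal_leI)
      qed
    qed
  qed measurable
  also have "\<dots> = (\<Sum>k. ennreal (D powr c * (1 - \<gamma>) * (q * \<gamma>) ^ k))"
  proof (rule suminf_cong)
    fix k
    have "0 \<le> D powr c * q ^ k"
      by (simp add: q_def)
    then show "ennreal (D powr c * q ^ k) * emeasure M (K k) = ennreal (D powr c * (1 - \<gamma>) * (q * \<gamma>) ^ k)"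
      by (simp add: K_def emeasure_eq_measure prob_\<kappa> ennreal_mult'[symmetric]
          algebra_simps)
  qed
  also have "\<dots> < \<infinity>"
  proof -
    have "summable (\<lambda>k. D powr c * (1 - \<gamma>) * (q * \<gamma>) ^ k)"
      using \<open>q * \<gamma> < 1\<close> \<gamma>_pos by (intro summable_mult summable_geometric) (simp add: q_def)
    moreover have "0 \<le> D powr c * (1 - \<gamma>) * (q * \<gamma>) ^ k" for k
      using \<gamma>_less_1 \<gamma>_pos by (simp add: q_def)
    ultimately show ?thesis
      by (simp add: ennreal_suminf_neq_top less_top)
  qed
  finally show ?thesis .
qed

lemma absolutely_continuous_distr_\<Omega>: "absolutely_continuous lborel (distr M lborel \<Omega>)"
proof -
  define S where "S n \<omega> = (\<Sum>k\<in>{1..n}. B k \<omega>)" for n \<omega>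
  have indep_S: "indep_var borel (B 0) borel (S n)" for n
  proof -
    let ?X = "\<lambda>i. case i of None \<Rightarrow> (\<lambda>\<omega>. real (\<kappa> \<omega>)) | Some j \<Rightarrow> B j"
    have "indep_vars (\<lambda>_. borel) ?X (insert (Some 0) (Some ` {1..n}))"
      by (rule indep_vars_subset[OF indep]) auto
    then have "indep_var borel (?X (Some 0)) borel (\<lambda>\<omega>. \<Sum>i\<in>Some ` {1..n}. ?X i \<omega>)"
      by (intro indep_vars_sum) auto
    then show ?thesis
      by (simp add: S_def[abs_def] sum.reindex)
  qed
  have ac_B0: "absolutely_continuous lborel (distr M lborel (B 0))"
    unfolding distr_B by (rule absolutely_continuous_uniform_measure) simp
  have \<Omega>_split: "\<Omega> \<omega> = B 0 \<omega> + S (\<kappa> \<omega>) \<omega>" for \<omega>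
    by (simp add: \<Omega>_eq S_def sum.atLeast_Suc_atMost)
  show ?thesis
    using indep_S ac_B0 \<Omega>_measurable
  proof (rule absolutely_continuous_distr_add_random_index)
    show "\<exists>n. \<Omega> \<omega> = B 0 \<omega> + S n \<omega>" for \<omega>
      using \<Omega>_split by blast
  qed
qed

lemma wide_sense_heavy_tailed_\<Omega>: "wide_sense_heavy_tailed M \<Omega>"
  using \<Omega>_measurable AE_\<Omega>_nonneg absolutely_continuous_distr_\<Omega> tail_exponent_pos
    moment_eq_top[OF order_refl]
  by (rule wide_sense_heavy_tailedI)

end

theorem theorem2:
  fixes M :: "'a measure" and b0 :: nat and m \<gamma> \<alpha> :: real
    and B :: "nat \<Rightarrow> 'a \<Rightarrow> real" and \<kappa> :: "'a \<Rightarrow> nat" and \<Omega> :: "'a \<Rightarrow> real"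
  assumes "prob_space M"
    and "b0 \<ge> 1" and "m > 1" and "0 < \<gamma>" and "\<gamma> < 1 / m"
    and "\<alpha> = - ln \<gamma> / ln m"
    and "\<And>k. B k \<in> borel_measurable M"
    and "\<And>k. distr M lborel (B k) = uniform_measure lborel {0 .. 2 * real b0 * m ^ k - 1}"
    and "\<kappa> \<in> measurable M (count_space UNIV)"
    and "\<And>k. measure M {\<omega> \<in> space M. \<kappa> \<omega> = k} = \<gamma> ^ k - \<gamma> ^ (k + 1)"
    and "prob_space.indep_vars M (\<lambda>_. borel)
           (\<lambda>i. case i of None \<Rightarrow> (\<lambda>\<omega>. real (\<kappa> \<omega>)) | Some k \<Rightarrow> B k) UNIV"
    and "\<And>\<omega>. \<Omega> \<omega> = (\<Sum>k\<in>{0..\<kappa> \<omega>}. B k \<omega>)"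
  shows "wide_sense_heavy_tailed M \<Omega> \<and>
         (\<forall>c::real. c \<ge> \<alpha> \<longrightarrow> (\<integral>\<^sup>+ \<omega>. ennreal (\<Omega> \<omega> powr c) \<partial>M) = \<infinity>) \<and>
         (\<forall>c::real. 0 \<le> c \<and> c < \<alpha> \<longrightarrow> (\<integral>\<^sup>+ \<omega>. ennreal (\<Omega> \<omega> powr c) \<partial>M) < \<infinity>)"
proof -
  interpret per_packet_backoff M b0 m \<gamma> B \<kappa> \<Omega>
    using assms(2-5,7-12)
    by (intro per_packet_backoff.intro[OF assms(1)] per_packet_backoff_axioms.intro)
  show ?thesis
    unfolding assms(6) using wide_sense_heavy_tailed_\<Omega> moment_eq_top moment_less_top by blast
qed

end
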